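(* Let $(\beta,\gamma)$ be antiferromagnetic and $\lambda>0$ with $(\beta,\gamma,\lambda)\neq(\beta,\beta,1)$, and let $x^*>0$ be the unique positive solution of $x^*=\frac{1+\gamma\lambda(x^* )^2}{\beta+\lambda(x^* )^2}$. For every $\epsilon_1,\epsilon_2>0$ there exist field gadgets $\mathcal{T}_1,\mathcal{T}_2$ with effective fields $R_1,R_2$ such that $|R_1-x^*|<\epsilon_1$ and $|R_2-x^*|<\epsilon_2|R_1-x^*|$.
   Context: A pair $(\beta,\gamma)$ with $\beta,\gamma\geq0$ is antiferromagnetic if $\beta\gamma\in[0,1)$ and at least one is nonzero. For a graph $G=(V,E)$ and $\lambda>0$, $\mu_{G;\beta,\gamma,\lambda}(\sigma)=\lambda^{|\sigma|}\beta^{m_0(\sigma)}\gamma^{m_1(\sigma)}/Z$ for $\sigma:V\to\{0,1\}$, $|\sigma|=\sum_v\sigma(v)$, $m_0,m_1$ the numbers of edges with both endpoints spin $0$, resp. spin $1$, convention $0^0=1$. A field gadget is a rooted tree $\mathcal{T}$ whose root $\rho$ has degree one; in the special case $\lambda=\frac{1-\beta}{1-\gamma}$ with $\beta\neq\gamma$, a field gadget is such a rooted tree in which in addition a triangle is attached on a subset of the leaves. With $\mu=\mu_{\mathcal{T};\beta,\gamma,\lambda}$, the effective field is $R_{\mathcal{T}}=\frac{1}{\lambda}\frac{\mu(\sigma(\rho)=1)}{\mu(\sigma(\rho)=0)}$. *)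

theory Defs
  imports Complex_Main "HOL-Library.FuncSet"
begin

definition simple_graph :: "'a set \<Rightarrow> 'a set set \<Rightarrow> bool" where
  "simple_graph V E \<longleftrightarrow> finite V \<and> (\<forall>e\<in>E. \<exists>u v. u \<in> V \<and> v \<in> V \<and> u \<noteq> v \<and> e = {u, v})"

definition adj :: "'a set set \<Rightarrow> 'a \<Rightarrow> 'a \<Rightarrow> bool" where
  "adj E u v \<longleftrightarrow> {u, v} \<in> E"

definition is_path :: "'a set set \<Rightarrow> 'a list \<Rightarrow> bool" where
  "is_path E xs \<longleftrightarrow> distinct xs \<and> (\<forall>i. Suc i < length xs \<longrightarrow> adj E (xs ! i) (xs ! Suc i))"

definition graph_connected :: "'a set \<Rightarrow> 'a set set \<Rightarrow> bool" where
  "graph_connected V E \<longleftrightarrow>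
     (\<forall>u\<in>V. \<forall>v\<in>V. \<exists>xs. xs \<noteq> [] \<and> hd xs = u \<and> last xs = v \<and> set xs \<subseteq> V \<and> is_path E xs)"

definition has_cycle :: "'a set set \<Rightarrow> bool" where
  "has_cycle E \<longleftrightarrow> (\<exists>xs. 3 \<le> length xs \<and> is_path E xs \<and> adj E (last xs) (hd xs))"

definition is_tree :: "'a set \<Rightarrow> 'a set set \<Rightarrow> bool" where
  "is_tree V E \<longleftrightarrow> simple_graph V E \<and> V \<noteq> {} \<and> graph_connected V E \<and> \<not> has_cycle E"

definition degree :: "'a set set \<Rightarrow> 'a \<Rightarrow> nat" where
  "degree E v = card {e \<in> E. v \<in> e}"

definition antiferromagnetic :: "real \<Rightarrow> real \<Rightarrow> bool" where
  "antiferromagnetic \<beta> \<gamma> \<longleftrightarrow> \<beta> \<ge> 0 \<and> \<gamma> \<ge> 0 \<and> \<beta> * \<gamma> < 1 \<and> (\<beta> \<noteq> 0 \<or> \<gamma> \<noteq> 0)"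

text \<open>Configurations \<sigma> : V \<rightarrow> {0,1} (extensional functions); unnormalised weight
  \<lambda>^|\<sigma>| \<beta>^m0 \<gamma>^m1, with 0^0 = 1 built into HOL's power.\<close>
definition configs :: "'a set \<Rightarrow> ('a \<Rightarrow> nat) set" where
  "configs V = (V \<rightarrow>\<^sub>E {0, 1})"

definition m0 :: "'a set set \<Rightarrow> ('a \<Rightarrow> nat) \<Rightarrow> nat" where
  "m0 E \<sigma> = card {e \<in> E. \<forall>v\<in>e. \<sigma> v = 0}"

definition m1 :: "'a set set \<Rightarrow> ('a \<Rightarrow> nat) \<Rightarrow> nat" where
  "m1 E \<sigma> = card {e \<in> E. \<forall>v\<in>e. \<sigma> v = 1}"

definition gibbs_weight :: "real \<Rightarrow> real \<Rightarrow> real \<Rightarrow> 'a set \<Rightarrow> 'a set set \<Rightarrow> ('a \<Rightarrow> nat) \<Rightarrow> real" where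
  "gibbs_weight \<beta> \<gamma> lam V E \<sigma> = lam ^ (\<Sum>v\<in>V. \<sigma> v) * \<beta> ^ m0 E \<sigma> * \<gamma> ^ m1 E \<sigma>"

definition partition_fn :: "real \<Rightarrow> real \<Rightarrow> real \<Rightarrow> 'a set \<Rightarrow> 'a set set \<Rightarrow> real" where
  "partition_fn \<beta> \<gamma> lam V E = (\<Sum>\<sigma>\<in>configs V. gibbs_weight \<beta> \<gamma> lam V E \<sigma>)"

definition gibbs_prob :: "real \<Rightarrow> real \<Rightarrow> real \<Rightarrow> 'a set \<Rightarrow> 'a set set \<Rightarrow> (('a \<Rightarrow> nat) \<Rightarrow> bool) \<Rightarrow> real" where
  "gibbs_prob \<beta> \<gamma> lam V E P =
     (\<Sum>\<sigma>\<in>{\<sigma> \<in> configs V. P \<sigma>}. gibbs_weight \<beta> \<gamma> lam V E \<sigma>) / partition_fn \<beta> \<gamma> lam V E"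

definition field_gadget :: "real \<Rightarrow> real \<Rightarrow> real \<Rightarrow> 'a set \<Rightarrow> 'a set set \<Rightarrow> 'a \<Rightarrow> bool" where
  "field_gadget \<beta> \<gamma> lam V E \<rho> \<longleftrightarrow>
     (if lam = (1 - \<beta>) / (1 - \<gamma>) \<and> \<beta> \<noteq> \<gamma> then
        (\<exists>VT ET L a b. is_tree VT ET \<and> \<rho> \<in> VT \<and> degree ET \<rho> = 1 \<and>
           L \<subseteq> {l \<in> VT. l \<noteq> \<rho> \<and> degree ET l = 1} \<and>
           inj_on a L \<and> inj_on b L \<and>
           a ` L \<inter> VT = {} \<and> b ` L \<inter> VT = {} \<and> a ` L \<inter> b ` L = {} \<and>
           V = VT \<union> a ` L \<union> b ` L \<and>
           E = ET \<union> (\<Union>l\<in>L. {{l, a l}, {l, b l}, {a l, b l}}))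
      else is_tree V E \<and> \<rho> \<in> V \<and> degree E \<rho> = 1)"

definition effective_field :: "real \<Rightarrow> real \<Rightarrow> real \<Rightarrow> 'a set \<Rightarrow> 'a set set \<Rightarrow> 'a \<Rightarrow> real" where
  "effective_field \<beta> \<gamma> lam V E \<rho> =
     (1 / lam) * (gibbs_prob \<beta> \<gamma> lam V E (\<lambda>\<sigma>. \<sigma> \<rho> = 1) / gibbs_prob \<beta> \<gamma> lam V E (\<lambda>\<sigma>. \<sigma> \<rho> = 0))"

end

(*
  The gadgets are binary tree shapes hung below a root edge (with a triangle at every leaf in the
  special case lam = (1 - beta)/(1 - gamma)). Summing out subtrees shows that the effective field of
  such a gadget is F(y), where F(z) = (1 + gamma lam z)/(beta + lam z) and y is the product of the
  fields F(.) of the two subtrees; so x* is the fixed point of R -> F(R^2). As beta gamma < 1, F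
  contracts the distance |ln u - ln v| on all such products, and R -> F(R F(R^2)), realised by the
  shape t -> Node t (Node t t), contracts towards x* because its two factors deviate from x* in
  opposite directions. Iterating it from the single-edge gadget, whose field differs from x* unless
  (beta, gamma, lam) = (beta, beta, 1), yields fields converging to x* and different from it; should
  an iterate X hit x* exactly, the shapes t -> Node t X are used instead. Two suitable members of
  such a sequence are the required gadgets.
*)

theory Submission
  imports Defs
begin

section \<open>Trees\<close>

lemma adj_commute: "adj E u v = adj E v u"
  by (simp add: adj_def insert_commute)

lemma adj_insert_edge_avoiding:
  "adj (insert {w, v} E) a b \<Longrightarrow> a \<noteq> v \<Longrightarrow> b \<noteq> v \<Longrightarrow> adj E a b"
  by (auto simp: adj_def doubleton_eq_iff)

lemma is_path_mono: "is_path E xs \<Longrightarrow> E \<subseteq> E' \<Longrightarrow> is_path E' xs"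
  by (auto simp: is_path_def adj_def)

lemma is_path_Cons:
  "is_path E (y # xs) \<longleftrightarrow> is_path E xs \<and> y \<notin> set xs \<and> (xs \<noteq> [] \<longrightarrow> adj E y (hd xs))"
proof (cases xs)
  case (Cons z zs)
  have "(\<forall>i. Suc i < length (y # xs) \<longrightarrow> adj E ((y # xs) ! i) ((y # xs) ! Suc i)) \<longleftrightarrow>
        adj E y z \<and> (\<forall>i. Suc i < length xs \<longrightarrow> adj E (xs ! i) (xs ! Suc i))"
    using Cons by (auto simp: less_Suc_eq_0_disj)
  then show ?thesis using Cons by (auto simp: is_path_def)
qed (simp add: is_path_def)

lemma is_path_rev: "is_path E (rev xs) \<longleftrightarrow> is_path E xs"
proof -
  have rev_path: "is_path E (rev xs)" if "is_path E xs" for xs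
    unfolding is_path_def
  proof (intro conjI allI impI)
    show "distinct (rev xs)" using that by (simp add: is_path_def)
    fix i assume i: "Suc i < length (rev xs)"
    let ?j = "length xs - 2 - i"
    have "adj E (xs ! ?j) (xs ! Suc ?j)"
      using that i by (auto simp: is_path_def)
    moreover have "rev xs ! i = xs ! Suc ?j" "rev xs ! Suc i = xs ! ?j"
      using i by (auto simp: rev_nth Suc_diff_Suc numeral_2_eq_2)
    ultimately show "adj E (rev xs ! i) (rev xs ! Suc i)" by (simp add: adj_commute)
  qed
  show ?thesis using rev_path[of xs] rev_path[of "rev xs"] by auto
qed

lemma is_path_snoc:
  "is_path E (xs @ [y]) \<longleftrightarrow> is_path E xs \<and> y \<notin> set xs \<and> (xs \<noteq> [] \<longrightarrow> adj E (last xs) y)"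
proof -
  have "is_path E (xs @ [y]) \<longleftrightarrow> is_path E (y # rev xs)"
    by (metis is_path_rev rev.simps(2) rev_rev_ident)
  then show ?thesis by (simp add: is_path_Cons is_path_rev hd_rev adj_commute)
qed

lemma simple_graph_add_leaf:
  assumes "simple_graph V E" "v \<notin> V" "w \<in> V"
  shows "simple_graph (insert v V) (insert {w, v} E)"
  unfolding simple_graph_def
proof (intro conjI ballI)
  show "finite (insert v V)" using assms(1) by (simp add: simple_graph_def)
  fix e assume "e \<in> insert {w, v} E"
  then consider "e = {w, v}" | "e \<in> E" by blast
  then show "\<exists>a b. a \<in> insert v V \<and> b \<in> insert v V \<and> a \<noteq> b \<and> e = {a, b}"
  proof cases
    case 1 then show ?thesis using assms(2,3) by blast
  next
    case 2 then show ?thesis using assms(1) unfolding simple_graph_def by blast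
  qed
qed

lemma graph_connected_add_leaf:
  assumes conn: "graph_connected V E" and v: "v \<notin> V" and w: "w \<in> V"
  shows "graph_connected (insert v V) (insert {w, v} E)"
  unfolding graph_connected_def
proof (intro ballI)
  let ?E = "insert {w, v} E"
  have path: "is_path ?E xs" if "is_path E xs" for xs
    using is_path_mono[OF that subset_insertI] .
  have to_w: "\<exists>xs. xs \<noteq> [] \<and> hd xs = a \<and> last xs = w \<and> set xs \<subseteq> V \<and> is_path E xs" if "a \<in> V" for a
    using conn that w unfolding graph_connected_def by blast
  fix a b assume a: "a \<in> insert v V" and b: "b \<in> insert v V"
  show "\<exists>xs. xs \<noteq> [] \<and> hd xs = a \<and> last xs = b \<and> set xs \<subseteq> insert v V \<and> is_path ?E xs"
  proof (cases "a = v"; cases "b = v")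
    assume "a = v" "b = v"
    then show ?thesis by (intro exI[of _ "[v]"]) (auto simp: is_path_def)
  next
    assume "a = v" "b \<noteq> v"
    then obtain xs where xs: "xs \<noteq> []" "hd xs = w" "last xs = b" "set xs \<subseteq> V" "is_path E xs"
      using conn w b unfolding graph_connected_def by blast
    have "is_path ?E (v # xs)"
      using xs v path[OF xs(5)] by (auto simp: is_path_Cons adj_def)
    then show ?thesis using xs \<open>a = v\<close> by (intro exI[of _ "v # xs"]) auto
  next
    assume "a \<noteq> v" "b = v"
    then obtain xs where xs: "xs \<noteq> []" "hd xs = a" "last xs = w" "set xs \<subseteq> V" "is_path E xs"
      using to_w a by blast
    have "is_path ?E (xs @ [v])"
      using xs v path[OF xs(5)] by (auto simp: is_path_snoc adj_def)
    then show ?thesis using xs \<open>b = v\<close> by (intro exI[of _ "xs @ [v]"]) auto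
  next
    assume "a \<noteq> v" "b \<noteq> v"
    then obtain xs where "xs \<noteq> []" "hd xs = a" "last xs = b" "set xs \<subseteq> V" "is_path E xs"
      using conn a b unfolding graph_connected_def by blast
    then show ?thesis using path by blast
  qed
qed

lemma cycle_vertex_two_neighbours:
  assumes len: "3 \<le> length xs" and path: "is_path E xs" and closed: "adj E (last xs) (hd xs)"
    and v: "v \<in> set xs"
  obtains u u' where "u \<noteq> u'" "adj E v u" "adj E v u'"
proof -
  let ?n = "length xs"
  have dist: "distinct xs" and step: "\<And>i. Suc i < ?n \<Longrightarrow> adj E (xs ! i) (xs ! Suc i)"
    using path by (auto simp: is_path_def)
  have "xs \<noteq> []" using len by auto
  then have closing: "adj E (xs ! 0) (xs ! (?n - 1))"
    using closed by (simp add: last_conv_nth hd_conv_nth adj_commute)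
  obtain i where i: "i < ?n" "xs ! i = v" using v by (metis in_set_conv_nth)
  have distinct_at: "xs ! j \<noteq> xs ! j'" if "j < ?n" "j' < ?n" "j \<noteq> j'" for j j'
    using dist that by (simp add: nth_eq_iff_index_eq)
  consider "i = 0" | "i = ?n - 1" | "0 < i" "i < ?n - 1" using i by linarith
  then show ?thesis
  proof cases
    case 1
    have "adj E v (xs ! 1)" "adj E v (xs ! (?n - 1))"
      using step[of 0] closing i 1 len by auto
    moreover have "xs ! 1 \<noteq> xs ! (?n - 1)" by (intro distinct_at) (use len in auto)
    ultimately show ?thesis by (blast intro: that)
  next
    case 2
    have "adj E (xs ! (?n - 2)) (xs ! Suc (?n - 2))" using step[of "?n - 2"] len by simp
    moreover have "Suc (?n - 2) = ?n - 1" using len by simp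
    ultimately have "adj E v (xs ! (?n - 2))" using i 2 by (metis adj_commute)
    moreover have "adj E v (xs ! 0)" using closing i 2 adj_commute by metis
    moreover have "xs ! (?n - 2) \<noteq> xs ! 0" by (intro distinct_at) (use len in auto)
    ultimately show ?thesis by (blast intro: that)
  next
    case 3
    have "adj E (xs ! (i - 1)) (xs ! Suc (i - 1))" using step[of "i - 1"] 3 by simp
    moreover have "Suc (i - 1) = i" using 3 by simp
    ultimately have "adj E v (xs ! (i - 1))" using i by (metis adj_commute)
    moreover have "adj E v (xs ! Suc i)" using step[of i] i 3 by simp
    moreover have "xs ! (i - 1) \<noteq> xs ! Suc i" by (intro distinct_at) (use 3 in auto)
    ultimately show ?thesis by (blast intro: that)
  qed
qed

lemma has_cycle_add_leaf:
  assumes cyc: "has_cycle (insert {w, v} E)" and fresh: "\<forall>e\<in>E. v \<notin> e" and vw: "v \<noteq> w"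
  shows "has_cycle E"
proof -
  let ?E = "insert {w, v} E"
  obtain xs where xs: "3 \<le> length xs" "is_path ?E xs" "adj ?E (last xs) (hd xs)"
    using cyc unfolding has_cycle_def by blast
  have only_w: "u = w" if "adj ?E v u" for u
    using that fresh vw by (auto simp: adj_def doubleton_eq_iff)
  have "v \<notin> set xs"
  proof
    assume "v \<in> set xs"
    from cycle_vertex_two_neighbours[OF xs this] obtain u u' where "u \<noteq> u'" "adj ?E v u" "adj ?E v u'" .
    then show False using only_w by blast
  qed
  have "is_path E xs"
    unfolding is_path_def
  proof (intro conjI allI impI)
    show "distinct xs" using xs(2) by (simp add: is_path_def)
    fix i assume i: "Suc i < length xs"
    have "adj ?E (xs ! i) (xs ! Suc i)" using xs(2) i by (simp add: is_path_def)
    moreover have "xs ! i \<noteq> v" "xs ! Suc i \<noteq> v"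
      using \<open>v \<notin> set xs\<close> i nth_mem[of i xs] nth_mem[of "Suc i" xs] by auto
    ultimately show "adj E (xs ! i) (xs ! Suc i)" by (rule adj_insert_edge_avoiding)
  qed
  moreover have "adj E (last xs) (hd xs)"
  proof (rule adj_insert_edge_avoiding[OF xs(3)])
    have "xs \<noteq> []" using xs(1) by auto
    then show "last xs \<noteq> v" "hd xs \<noteq> v" using \<open>v \<notin> set xs\<close> by (auto dest: last_in_set hd_in_set)
  qed
  ultimately show ?thesis using xs(1) unfolding has_cycle_def by blast
qed

lemma is_tree_add_leaf:
  assumes T: "is_tree V E" and v: "v \<notin> V" and w: "w \<in> V"
  shows "is_tree (insert v V) (insert {w, v} E)"
proof -
  have "\<forall>e\<in>E. v \<notin> e" "v \<noteq> w"
    using T v w by (auto simp: is_tree_def simple_graph_def)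
  then have "\<not> has_cycle (insert {w, v} E)"
    using T has_cycle_add_leaf by (metis is_tree_def)
  then show ?thesis
    using T simple_graph_add_leaf[OF _ v w] graph_connected_add_leaf[OF _ v w] by (auto simp: is_tree_def)
qed

lemma is_tree_singleton: "is_tree {a} {}"
  unfolding is_tree_def simple_graph_def graph_connected_def has_cycle_def
  by (auto intro!: exI[of _ "[a]"] simp: is_path_def adj_def)

section \<open>Binary shapes and field gadgets\<close>

datatype shape = Leaf | Node shape shape

text \<open>A shape hung below the label \<open>r\<close> occupies the labels \<open>r + 1, \<dots>, r + shape_size t\<close>:
  the children of \<open>r\<close> in \<open>Node a b\<close> are \<open>r + 1\<close> and \<open>r + 2 + shape_size a\<close>, and every leaf \<open>l\<close> keeps
  \<open>l + 1\<close> and \<open>l + 2\<close> free for the two extra vertices of a triangle.\<close>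

fun shape_size :: "shape \<Rightarrow> nat" where
  "shape_size Leaf = 2"
| "shape_size (Node a b) = shape_size a + shape_size b + 2"

fun shape_V :: "shape \<Rightarrow> nat \<Rightarrow> nat set" where
  "shape_V Leaf r = {}"
| "shape_V (Node a b) r =
     insert (Suc r) (shape_V a (Suc r)) \<union> insert (r + 2 + shape_size a) (shape_V b (r + 2 + shape_size a))"

fun shape_E :: "shape \<Rightarrow> nat \<Rightarrow> nat set set" where
  "shape_E Leaf r = {}"
| "shape_E (Node a b) r =
     insert {r, Suc r} (shape_E a (Suc r)) \<union> insert {r, r + 2 + shape_size a} (shape_E b (r + 2 + shape_size a))"

fun shape_leaves :: "shape \<Rightarrow> nat \<Rightarrow> nat set" where
  "shape_leaves Leaf r = {r}"
| "shape_leaves (Node a b) r = shape_leaves a (Suc r) \<union> shape_leaves b (r + 2 + shape_size a)"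

lemma shape_V_range: "v \<in> shape_V t r \<Longrightarrow> r < v \<and> v \<le> r + shape_size t"
proof (induction t arbitrary: r)
  case (Node a b)
  then consider "v = Suc r" | "v \<in> shape_V a (Suc r)" | "v = r + 2 + shape_size a"
    | "v \<in> shape_V b (r + 2 + shape_size a)"
    by auto
  then show ?case
    by cases (use Node.IH in fastforce)+
qed simp

lemma shape_leaves_range: "l \<in> shape_leaves t r \<Longrightarrow> r \<le> l \<and> l + 2 \<le> r + shape_size t"
proof (induction t arbitrary: r)
  case (Node a b)
  then consider "l \<in> shape_leaves a (Suc r)" | "l \<in> shape_leaves b (r + 2 + shape_size a)"
    by auto
  then show ?case
    by cases (use Node.IH in fastforce)+
qed simp

lemma shape_leaves_subset: "l \<in> shape_leaves t r \<Longrightarrow> l = r \<or> l \<in> shape_V t r"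
  by (induction t arbitrary: r) auto

lemma shape_leaf_triangle_fresh:
  "l \<in> shape_leaves t r \<Longrightarrow> Suc l \<notin> shape_V t r \<and> l + 2 \<notin> shape_V t r"
proof (induction t arbitrary: r)
  case (Node a b)
  let ?c = "r + 2 + shape_size a"
  show ?case
  proof (cases "l \<in> shape_leaves a (Suc r)")
    case True
    then show ?thesis
      using Node.IH(1) shape_leaves_range[OF True] shape_V_range[of _ b ?c] by fastforce
  next
    case False
    then have "l \<in> shape_leaves b ?c" using Node.prems by simp
    then show ?thesis
      using Node.IH(2) shape_leaves_range[of l b ?c] shape_V_range[of _ a "Suc r"] by fastforce
  qed
qed simp

lemma finite_shape_V: "finite (shape_V t r)"
  by (induction t arbitrary: r) auto

lemma finite_shape_E: "finite (shape_E t r)"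
  by (induction t arbitrary: r) auto

lemma finite_shape_leaves: "finite (shape_leaves t r)"
  by (induction t arbitrary: r) auto

lemma shape_E_subset: "e \<in> shape_E t r \<Longrightarrow> e \<subseteq> insert r (shape_V t r)"
proof (induction t arbitrary: r)
  case (Node a b)
  then consider "e = {r, Suc r}" | "e \<in> shape_E a (Suc r)" | "e = {r, r + 2 + shape_size a}"
    | "e \<in> shape_E b (r + 2 + shape_size a)"
    by auto
  then show ?case
    by cases (use Node.IH in auto)
qed simp

lemma shape_E_nonempty: "e \<in> shape_E t r \<Longrightarrow> e \<noteq> {}"
  by (induction t arbitrary: r) auto

lemma is_tree_extend_shape:
  "is_tree V E \<Longrightarrow> r \<in> V \<Longrightarrow> \<forall>v\<in>V. v \<le> r \<Longrightarrow> is_tree (V \<union> shape_V t r) (E \<union> shape_E t r)"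
proof (induction t arbitrary: V E r)
  case (Node a b)
  let ?c1 = "Suc r" and ?c2 = "r + 2 + shape_size a"
  have "?c1 \<notin> V" using Node.prems(3) by auto
  then have "is_tree (insert ?c1 V) (insert {r, ?c1} E)"
    using is_tree_add_leaf[OF Node.prems(1) _ Node.prems(2)] by blast
  then have left: "is_tree (insert ?c1 V \<union> shape_V a ?c1) (insert {r, ?c1} E \<union> shape_E a ?c1)"
    using Node.IH(1) Node.prems(3) by fastforce
  have "?c2 \<notin> insert ?c1 V \<union> shape_V a ?c1"
    using Node.prems(3) shape_V_range[of _ a ?c1] by fastforce
  then have "is_tree (insert ?c2 (insert ?c1 V \<union> shape_V a ?c1))
                     (insert {r, ?c2} (insert {r, ?c1} E \<union> shape_E a ?c1))"
    using is_tree_add_leaf[OF left] Node.prems(2) by blast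
  moreover have "\<forall>v\<in>insert ?c2 (insert ?c1 V \<union> shape_V a ?c1). v \<le> ?c2"
    using Node.prems(3) shape_V_range[of _ a ?c1] by fastforce
  ultimately have "is_tree (insert ?c2 (insert ?c1 V \<union> shape_V a ?c1) \<union> shape_V b ?c2)
                           (insert {r, ?c2} (insert {r, ?c1} E \<union> shape_E a ?c1) \<union> shape_E b ?c2)"
    using Node.IH(2) by blast
  moreover have "insert ?c2 (insert ?c1 V \<union> shape_V a ?c1) \<union> shape_V b ?c2 = V \<union> shape_V (Node a b) r"
    "insert {r, ?c2} (insert {r, ?c1} E \<union> shape_E a ?c1) \<union> shape_E b ?c2 = E \<union> shape_E (Node a b) r"
    by auto
  ultimately show ?case by simp
qed simp

lemma degree_shape_leaf:
  "l \<in> shape_leaves t r \<Longrightarrow> q < r \<Longrightarrow> degree (insert {q, r} (shape_E t r)) l = 1"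
proof (induction t arbitrary: q r)
  case Leaf
  then have "{e \<in> insert {q, r} (shape_E Leaf r). l \<in> e} = {{q, r}}" by auto
  then show ?case by (simp add: degree_def)
next
  case (Node a b)
  let ?c1 = "Suc r" and ?c2 = "r + 2 + shape_size a"
  from Node.prems(1) consider (left) "l \<in> shape_leaves a ?c1" | (right) "l \<in> shape_leaves b ?c2"
    by auto
  then show ?case
  proof cases
    case left
    have l: "?c1 \<le> l" "l + 2 \<le> ?c1 + shape_size a" using shape_leaves_range[OF left] by auto
    have "l \<notin> e" if "e \<in> shape_E b ?c2" for e
      using l shape_E_subset[OF that] shape_V_range[of _ b ?c2] by fastforce
    then have "{e \<in> insert {q, r} (shape_E (Node a b) r). l \<in> e}
        = {e \<in> insert {r, ?c1} (shape_E a ?c1). l \<in> e}"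
      using l Node.prems(2) by auto
    then show ?thesis using Node.IH(1)[OF left] by (simp add: degree_def)
  next
    case right
    have l: "?c2 \<le> l" using shape_leaves_range[OF right] by auto
    have "l \<notin> e" if "e \<in> shape_E a ?c1" for e
      using l shape_E_subset[OF that] shape_V_range[of _ a ?c1] by fastforce
    then have "{e \<in> insert {q, r} (shape_E (Node a b) r). l \<in> e}
        = {e \<in> insert {r, ?c2} (shape_E b ?c2). l \<in> e}"
      using l Node.prems(2) by auto
    then show ?thesis using Node.IH(2)[OF right] by (simp add: degree_def)
  qed
qed

definition tree_V :: "shape \<Rightarrow> nat set" where
  "tree_V t = {0, 1} \<union> shape_V t 1"

definition tree_E :: "shape \<Rightarrow> nat set set" where
  "tree_E t = {{0, 1}} \<union> shape_E t 1"

lemma is_tree_tree: "is_tree (tree_V t) (tree_E t)"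
proof -
  have "is_tree (insert (1::nat) {0}) (insert {0, 1} {})"
    using is_tree_add_leaf[OF is_tree_singleton[of "0::nat"], of 1 0] by auto
  then show ?thesis
    using is_tree_extend_shape[of "{0, 1}" "{{0, 1}}" 1 t] by (simp add: insert_commute tree_V_def tree_E_def)
qed

lemma degree_tree_root: "degree (tree_E t) 0 = 1"
proof -
  have "{e \<in> tree_E t. 0 \<in> e} = {{0, 1}}"
    using shape_E_subset[of _ t 1] shape_V_range[of 0 t 1] by (auto simp: tree_E_def)
  then show ?thesis by (simp add: degree_def)
qed

lemma degree_tree_leaf: "l \<in> shape_leaves t 1 \<Longrightarrow> degree (tree_E t) l = 1"
  using degree_shape_leaf[of l t 1 0] by (simp add: tree_E_def)

definition triangle_edges :: "nat set \<Rightarrow> nat set set" where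
  "triangle_edges L = (\<Union>l\<in>L. {{l, Suc l}, {l, l + 2}, {Suc l, l + 2}})"

definition decorated_V :: "bool \<Rightarrow> shape \<Rightarrow> nat \<Rightarrow> nat set" where
  "decorated_V tri t r =
     shape_V t r \<union> (if tri then Suc ` shape_leaves t r \<union> (\<lambda>l. l + 2) ` shape_leaves t r else {})"

definition decorated_E :: "bool \<Rightarrow> shape \<Rightarrow> nat \<Rightarrow> nat set set" where
  "decorated_E tri t r = shape_E t r \<union> (if tri then triangle_edges (shape_leaves t r) else {})"

lemma decorated_V_Leaf: "decorated_V tri Leaf r = (if tri then {Suc r, r + 2} else {})"
  by (auto simp: decorated_V_def)

lemma decorated_E_Leaf:
  "decorated_E tri Leaf r = (if tri then {{r, Suc r}, {r, r + 2}, {Suc r, r + 2}} else {})"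
  by (simp add: decorated_E_def triangle_edges_def)

lemma decorated_V_Node:
  "decorated_V tri (Node a b) r = insert (Suc r) (decorated_V tri a (Suc r)) \<union>
     insert (r + 2 + shape_size a) (decorated_V tri b (r + 2 + shape_size a))"
  by (auto simp: decorated_V_def)

lemma decorated_E_Node:
  "decorated_E tri (Node a b) r = insert {r, Suc r} (decorated_E tri a (Suc r)) \<union>
     insert {r, r + 2 + shape_size a} (decorated_E tri b (r + 2 + shape_size a))"
  by (auto simp: decorated_E_def triangle_edges_def)

lemma decorated_V_range: "v \<in> decorated_V tri t r \<Longrightarrow> r < v \<and> v \<le> r + shape_size t"
  using shape_V_range shape_leaves_range by (fastforce simp: decorated_V_def split: if_splits)

lemma finite_decorated_V: "finite (decorated_V tri t r)"
  by (simp add: decorated_V_def finite_shape_V finite_shape_leaves)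

lemma finite_decorated_E: "finite (decorated_E tri t r)"
  by (simp add: decorated_E_def finite_shape_E finite_shape_leaves triangle_edges_def)

lemma decorated_E_subset: "e \<in> decorated_E tri t r \<Longrightarrow> e \<subseteq> insert r (decorated_V tri t r)"
  using shape_E_subset shape_leaves_subset
  by (fastforce simp: decorated_E_def decorated_V_def triangle_edges_def split: if_splits)

lemma decorated_E_nonempty: "e \<in> decorated_E tri t r \<Longrightarrow> e \<noteq> {}"
  using shape_E_nonempty by (auto simp: decorated_E_def triangle_edges_def split: if_splits)

definition gadget_V :: "bool \<Rightarrow> shape \<Rightarrow> nat set" where
  "gadget_V tri t = {0, 1} \<union> decorated_V tri t 1"

definition gadget_E :: "bool \<Rightarrow> shape \<Rightarrow> nat set set" where
  "gadget_E tri t = {{0, 1}} \<union> decorated_E tri t 1"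

lemma finite_gadget_V: "finite (gadget_V tri t)"
  by (simp add: gadget_V_def finite_decorated_V)

lemma finite_gadget_E: "finite (gadget_E tri t)"
  by (simp add: gadget_E_def finite_decorated_E)

lemma gadget_E_nonempty: "e \<in> gadget_E tri t \<Longrightarrow> e \<noteq> {}"
  using decorated_E_nonempty by (auto simp: gadget_E_def)

definition triangle_case :: "real \<Rightarrow> real \<Rightarrow> real \<Rightarrow> bool" where
  "triangle_case \<beta> \<gamma> lam \<longleftrightarrow> lam = (1 - \<beta>) / (1 - \<gamma>) \<and> \<beta> \<noteq> \<gamma>"

lemma triangle_vertices_fresh:
  fixes t :: shape and L :: "nat set"
  defines "L \<equiv> shape_leaves t 1"
  shows "Suc ` L \<inter> tree_V t = {}" "(\<lambda>l. l + 2) ` L \<inter> tree_V t = {}"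
    and "Suc ` L \<inter> (\<lambda>l. l + 2) ` L = {}"
proof -
  have fresh: "Suc l \<notin> tree_V t" "l + 2 \<notin> tree_V t" if "l \<in> L" for l
    using that shape_leaf_triangle_fresh shape_leaves_range by (fastforce simp: L_def tree_V_def)+
  then show "Suc ` L \<inter> tree_V t = {}" "(\<lambda>l. l + 2) ` L \<inter> tree_V t = {}" by auto
  have in_tree: "l \<in> tree_V t" if "l \<in> L" for l
    using that shape_leaves_subset by (fastforce simp: L_def tree_V_def)
  have "Suc l \<noteq> l' + 2" if "l \<in> L" "l' \<in> L" for l l'
  proof
    assume "Suc l = l' + 2"
    then have "l = Suc l'" by simp
    then show False using in_tree[OF that(1)] fresh(1)[OF that(2)] by simp
  qed
  then show "Suc ` L \<inter> (\<lambda>l. l + 2) ` L = {}" by auto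
qed

lemma field_gadget_gadget:
  fixes \<beta> \<gamma> lam :: real
  defines "tri \<equiv> triangle_case \<beta> \<gamma> lam"
  shows "field_gadget \<beta> \<gamma> lam (gadget_V tri t) (gadget_E tri t) 0"
proof (cases tri)
  case False
  then have VE: "gadget_V tri t = tree_V t" "gadget_E tri t = tree_E t"
    by (auto simp: gadget_V_def gadget_E_def decorated_V_def decorated_E_def tree_V_def tree_E_def)
  have plain: "\<not> (lam = (1 - \<beta>) / (1 - \<gamma>) \<and> \<beta> \<noteq> \<gamma>)"
    using False by (simp add: tri_def triangle_case_def)
  show ?thesis
    using is_tree_tree degree_tree_root unfolding field_gadget_def if_not_P[OF plain] VE
    by (simp add: tree_V_def)
next
  case True
  let ?L = "shape_leaves t 1"
  have leaves: "?L \<subseteq> {l \<in> tree_V t. l \<noteq> 0 \<and> degree (tree_E t) l = 1}"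
    using shape_leaves_subset shape_leaves_range degree_tree_leaf by (fastforce simp: tree_V_def)
  have VE: "gadget_V tri t = tree_V t \<union> Suc ` ?L \<union> (\<lambda>l. l + 2) ` ?L"
    "gadget_E tri t = tree_E t \<union> (\<Union>l\<in>?L. {{l, Suc l}, {l, l + 2}, {Suc l, l + 2}})"
    using True by (auto simp: gadget_V_def gadget_E_def decorated_V_def decorated_E_def
        tree_V_def tree_E_def triangle_edges_def)
  have inj: "inj_on Suc ?L" "inj_on (\<lambda>l. l + 2) ?L" by (auto simp: inj_on_def)
  have special: "lam = (1 - \<beta>) / (1 - \<gamma>) \<and> \<beta> \<noteq> \<gamma>"
    using True by (simp add: tri_def triangle_case_def)
  show ?thesis
    using is_tree_tree degree_tree_root triangle_vertices_fresh leaves inj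
    unfolding field_gadget_def if_P[OF special] VE
    by (intro exI[of _ "tree_V t"] exI[of _ "tree_E t"] exI[of _ ?L] exI[of _ Suc]
        exI[of _ "\<lambda>l. l + 2"]) (auto simp: tree_V_def)
qed

section \<open>Partition functions with vertex activities\<close>

lemma sum_configs_insert:
  assumes "v \<notin> V"
  shows "(\<Sum>\<sigma>\<in>configs (insert v V). F \<sigma>) = (\<Sum>\<sigma>\<in>configs V. \<Sum>c\<in>{0, 1}. F (\<sigma>(v := c)))"
proof -
  have "configs (insert v V) = (\<lambda>(y, g). g(v := y)) ` ({0, 1} \<times> configs V)"
    unfolding configs_def by (rule PiE_insert_eq)
  moreover have "inj_on (\<lambda>(y, g). g(v := y)) ({0::nat, 1} \<times> configs V)"
    unfolding configs_def using inj_combinator[OF assms, of "\<lambda>_. {0::nat, 1}"] by simp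
  ultimately have "(\<Sum>\<sigma>\<in>configs (insert v V). F \<sigma>) = (\<Sum>(c, \<sigma>)\<in>{0, 1} \<times> configs V. F (\<sigma>(v := c)))"
    by (simp add: sum.reindex case_prod_unfold)
  also have "\<dots> = (\<Sum>\<sigma>\<in>configs V. \<Sum>c\<in>{0, 1}. F (\<sigma>(v := c)))"
    by (subst sum.cartesian_product[symmetric]) (rule sum.swap)
  finally show ?thesis .
qed

lemma configs_range: "\<sigma> \<in> configs V \<Longrightarrow> u \<in> V \<Longrightarrow> \<sigma> u \<in> {0, 1}"
  by (auto simp: configs_def)

lemma prod_fun_upd_mult:
  fixes f :: "nat \<Rightarrow> 'b::comm_monoid_mult"
  assumes "finite V" "w \<in> V"
  shows "(\<Prod>u\<in>V. (h(w := \<lambda>c. h w c * f c)) u (\<sigma> u)) = (\<Prod>u\<in>V. h u (\<sigma> u)) * f (\<sigma> w)"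
proof -
  have V: "V = insert w (V - {w})" using assms by auto
  have "(\<Prod>u\<in>V. (h(w := \<lambda>c. h w c * f c)) u (\<sigma> u)) = h w (\<sigma> w) * f (\<sigma> w) * (\<Prod>u\<in>V - {w}. h u (\<sigma> u))"
    by (subst V, subst prod.insert) (use assms in auto)
  also have "\<dots> = (\<Prod>u\<in>V. h u (\<sigma> u)) * f (\<sigma> w)"
    by (subst (2) V, subst prod.insert) (use assms in \<open>auto simp: mult_ac\<close>)
  finally show ?thesis .
qed

lemma finite_edges: "finite V \<Longrightarrow> \<forall>e\<in>E. e \<subseteq> V \<Longrightarrow> finite E"
  by (meson PowI finite_Pow_iff finite_subset subsetI)

locale spin_system =
  fixes \<beta> \<gamma> lam :: real
begin

definition interaction :: "nat \<Rightarrow> nat \<Rightarrow> real" where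
  "interaction c c' = (if c = 0 \<and> c' = 0 then \<beta> else if c = 1 \<and> c' = 1 then \<gamma> else 1)"

definition edge_weight :: "('a \<Rightarrow> nat) \<Rightarrow> 'a set \<Rightarrow> real" where
  "edge_weight \<sigma> e = (if \<forall>u\<in>e. \<sigma> u = 0 then \<beta> else if \<forall>u\<in>e. \<sigma> u = 1 then \<gamma> else 1)"

definition config_weight :: "'a set \<Rightarrow> 'a set set \<Rightarrow> ('a \<Rightarrow> nat \<Rightarrow> real) \<Rightarrow> ('a \<Rightarrow> nat) \<Rightarrow> real" where
  "config_weight V E h \<sigma> = (\<Prod>v\<in>V. h v (\<sigma> v)) * (\<Prod>e\<in>E. edge_weight \<sigma> e)"

definition weighted_pf :: "'a set \<Rightarrow> 'a set set \<Rightarrow> ('a \<Rightarrow> nat \<Rightarrow> real) \<Rightarrow> real" where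
  "weighted_pf V E h = (\<Sum>\<sigma>\<in>configs V. config_weight V E h \<sigma>)"

lemma edge_weight_cong: "\<forall>u\<in>e. \<sigma> u = \<sigma>' u \<Longrightarrow> edge_weight \<sigma> e = edge_weight \<sigma>' e"
  by (simp add: edge_weight_def)

lemma edge_weight_doubleton:
  "\<sigma> a \<in> {0, 1} \<Longrightarrow> \<sigma> b \<in> {0, 1} \<Longrightarrow> edge_weight \<sigma> {a, b} = interaction (\<sigma> a) (\<sigma> b)"
  by (auto simp: edge_weight_def interaction_def)

lemma weighted_pf_cong: "\<forall>v\<in>V. h v = h' v \<Longrightarrow> weighted_pf V E h = weighted_pf V E h'"
  unfolding weighted_pf_def config_weight_def by (intro sum.cong refl arg_cong2[where f = "(*)"] prod.cong) auto

lemma weighted_pf_add_leaf: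
  assumes fin: "finite V" and v: "v \<notin> V" and w: "w \<in> V" and E: "\<forall>e\<in>E. e \<subseteq> V"
  shows "weighted_pf (insert v V) (insert {w, v} E) h
       = weighted_pf V E (h(w := \<lambda>c. h w c * (\<Sum>c'\<in>{0, 1}. h v c' * interaction c c')))"
proof -
  have "{w, v} \<notin> E" using E v by auto
  moreover have "finite E" using finite_edges[OF fin E] .
  ultimately have split: "config_weight (insert v V) (insert {w, v} E) h (\<sigma>(v := c))
      = h v c * interaction (\<sigma> w) c * config_weight V E h \<sigma>"
    if "\<sigma> \<in> configs V" "c \<in> {0, 1}" for \<sigma> c
  proof -
    have "u \<noteq> v" if "u \<in> e" "e \<in> E" for u e
      using that v E by blast
    then have "(\<Prod>u\<in>V. h u ((\<sigma>(v := c)) u)) = (\<Prod>u\<in>V. h u (\<sigma> u))"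
      "(\<Prod>e\<in>E. edge_weight (\<sigma>(v := c)) e) = (\<Prod>e\<in>E. edge_weight \<sigma> e)"
      using v by (auto intro!: prod.cong edge_weight_cong)
    moreover have "edge_weight (\<sigma>(v := c)) {w, v} = interaction (\<sigma> w) c"
      using edge_weight_doubleton[of "\<sigma>(v := c)" w v] configs_range[OF that(1) w] that(2) v w by auto
    ultimately show ?thesis
      using fin v \<open>{w, v} \<notin> E\<close> \<open>finite E\<close> by (simp add: config_weight_def)
  qed
  have "weighted_pf (insert v V) (insert {w, v} E) h
      = (\<Sum>\<sigma>\<in>configs V. (\<Sum>c\<in>{0, 1}. h v c * interaction (\<sigma> w) c) * config_weight V E h \<sigma>)"
    unfolding weighted_pf_def sum_configs_insert[OF v] by (intro sum.cong refl) (simp add: split distrib_right)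
  also have "\<dots> = weighted_pf V E (h(w := \<lambda>c. h w c * (\<Sum>c'\<in>{0, 1}. h v c' * interaction c c')))"
    unfolding weighted_pf_def config_weight_def
    by (intro sum.cong refl) (subst prod_fun_upd_mult[OF fin w], simp add: mult_ac)
  finally show ?thesis .
qed

lemma weighted_pf_add_triangle:
  assumes fin: "finite V" and a: "a \<notin> V" and b: "b \<notin> V" and ab: "a \<noteq> b" and l: "l \<in> V"
    and E: "\<forall>e\<in>E. e \<subseteq> V"
  shows "weighted_pf (insert b (insert a V)) (insert {l, a} (insert {l, b} (insert {a, b} E))) h
       = weighted_pf V E (h(l := \<lambda>c. h l c * (\<Sum>c1\<in>{0, 1}. \<Sum>c2\<in>{0, 1}.
            h a c1 * h b c2 * interaction c c1 * interaction c c2 * interaction c1 c2)))"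
proof -
  let ?A = interaction
  let ?E = "insert {l, a} (insert {l, b} (insert {a, b} E))"
  have b': "b \<notin> insert a V" using b ab by auto
  have fresh: "{a, b} \<notin> E" "{l, b} \<notin> insert {a, b} E" "{l, a} \<notin> insert {l, b} (insert {a, b} E)"
    using E a b l ab by (auto simp: doubleton_eq_iff)
  have "finite E" using finite_edges[OF fin E] .
  have split: "config_weight (insert b (insert a V)) ?E h (\<sigma>(a := c1, b := c2))
     = (h a c1 * h b c2 * ?A (\<sigma> l) c1 * ?A (\<sigma> l) c2 * ?A c1 c2) * config_weight V E h \<sigma>"
    if \<sigma>: "\<sigma> \<in> configs V" and c: "c1 \<in> {0, 1}" "c2 \<in> {0, 1}" for \<sigma> c1 c2
  proof -
    let ?s = "\<sigma>(a := c1, b := c2)"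
    have "u \<noteq> a" "u \<noteq> b" if "u \<in> e" "e \<in> E" for u e
      using that a b E by blast+
    then have "(\<Prod>u\<in>V. h u (?s u)) = (\<Prod>u\<in>V. h u (\<sigma> u))"
      "(\<Prod>e\<in>E. edge_weight ?s e) = (\<Prod>e\<in>E. edge_weight \<sigma> e)"
      using a b by (auto intro!: prod.cong edge_weight_cong)
    moreover have "?s l = \<sigma> l" "?s a = c1" "?s b = c2" "\<sigma> l \<in> {0, 1}"
      using a b l ab configs_range[OF \<sigma> l] by auto
    then have "edge_weight ?s {l, a} = ?A (\<sigma> l) c1" "edge_weight ?s {l, b} = ?A (\<sigma> l) c2"
      "edge_weight ?s {a, b} = ?A c1 c2"
      using edge_weight_doubleton[of ?s] c by auto
    ultimately show ?thesis
      using fin a b' ab \<open>finite E\<close> fresh by (simp add: config_weight_def algebra_simps)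
  qed
  have "weighted_pf (insert b (insert a V)) ?E h
      = (\<Sum>\<sigma>\<in>configs V. (\<Sum>c1\<in>{0, 1}. \<Sum>c2\<in>{0, 1}.
           h a c1 * h b c2 * ?A (\<sigma> l) c1 * ?A (\<sigma> l) c2 * ?A c1 c2) * config_weight V E h \<sigma>)"
    unfolding weighted_pf_def sum_configs_insert[OF b'] sum_configs_insert[OF a]
    by (intro sum.cong refl) (simp add: split distrib_right)
  also have "\<dots> = weighted_pf V E (h(l := \<lambda>c. h l c * (\<Sum>c1\<in>{0, 1}. \<Sum>c2\<in>{0, 1}.
            h a c1 * h b c2 * ?A c c1 * ?A c c2 * ?A c1 c2)))"
    unfolding weighted_pf_def config_weight_def
    by (intro sum.cong refl) (subst prod_fun_upd_mult[OF fin l], simp add: mult_ac)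
  finally show ?thesis .
qed

lemma weighted_pf_singleton: "weighted_pf {v} {} h = h v 0 + h v 1"
proof -
  have "weighted_pf {v} {} h = (\<Sum>\<sigma>\<in>configs {}. \<Sum>c\<in>{0, 1}. config_weight {v} {} h (\<sigma>(v := c)))"
    unfolding weighted_pf_def using sum_configs_insert[of v "{}"] by simp
  then show ?thesis by (simp add: config_weight_def configs_def)
qed

lemma gibbs_weight_eq_config_weight:
  assumes "finite E" "\<forall>e\<in>E. e \<noteq> {}"
  shows "gibbs_weight \<beta> \<gamma> lam V E \<sigma> = config_weight V E (\<lambda>_ c. lam ^ c) \<sigma>"
proof -
  let ?P0 = "\<lambda>e. \<forall>u\<in>e. \<sigma> u = 0" and ?P1 = "\<lambda>e. \<forall>u\<in>e. \<sigma> u = 1"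
  have "(\<Prod>e\<in>E. edge_weight \<sigma> e) = (\<Prod>e\<in>E. if ?P0 e then \<beta> else if ?P1 e then \<gamma> else 1)"
    by (simp add: edge_weight_def)
  also have "\<dots> = (\<Prod>e\<in>E \<inter> {e. ?P0 e}. \<beta>) * (\<Prod>e\<in>E \<inter> - {e. ?P0 e}. if ?P1 e then \<gamma> else 1)"
    by (rule prod.If_cases) (fact assms(1))
  also have "(\<Prod>e\<in>E \<inter> - {e. ?P0 e}. if ?P1 e then \<gamma> else 1)
      = (\<Prod>e\<in>E \<inter> - {e. ?P0 e} \<inter> {e. ?P1 e}. \<gamma>) * (\<Prod>e\<in>E \<inter> - {e. ?P0 e} \<inter> - {e. ?P1 e}. 1)"
    by (rule prod.If_cases) (use assms(1) in auto)
  also have "E \<inter> - {e. ?P0 e} \<inter> {e. ?P1 e} = {e \<in> E. ?P1 e}"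
    using assms(2) by fastforce
  also have "E \<inter> {e. ?P0 e} = {e \<in> E. ?P0 e}" by auto
  finally have "(\<Prod>e\<in>E. edge_weight \<sigma> e) = \<beta> ^ m0 E \<sigma> * \<gamma> ^ m1 E \<sigma>"
    by (simp add: m0_def m1_def)
  then show ?thesis
    by (simp add: gibbs_weight_def config_weight_def power_sum mult.assoc)
qed

lemma partition_fn_eq_weighted_pf:
  assumes "finite E" "\<forall>e\<in>E. e \<noteq> {}"
  shows "partition_fn \<beta> \<gamma> lam V E = weighted_pf V E (\<lambda>_ c. lam ^ c)"
  unfolding partition_fn_def weighted_pf_def using gibbs_weight_eq_config_weight[OF assms] by simp

lemma sum_gibbs_weight_state_eq_weighted_pf:
  assumes "finite V" "finite E" "\<forall>e\<in>E. e \<noteq> {}" "\<rho> \<in> V"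
  shows "(\<Sum>\<sigma>\<in>{\<sigma> \<in> configs V. \<sigma> \<rho> = c}. gibbs_weight \<beta> \<gamma> lam V E \<sigma>)
       = weighted_pf V E ((\<lambda>_ x. lam ^ x)(\<rho> := \<lambda>x. lam ^ x * (if x = c then 1 else 0)))"
proof -
  have "finite (configs V)" using assms(1) by (simp add: configs_def finite_PiE)
  then have "(\<Sum>\<sigma>\<in>{\<sigma> \<in> configs V. \<sigma> \<rho> = c}. gibbs_weight \<beta> \<gamma> lam V E \<sigma>)
      = (\<Sum>\<sigma>\<in>configs V. config_weight V E (\<lambda>_ x. lam ^ x) \<sigma> * (if \<sigma> \<rho> = c then 1 else 0))"
    by (simp add: sum.inter_filter gibbs_weight_eq_config_weight[OF assms(2,3)] if_distrib cong: if_cong)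
  also have "\<dots> = weighted_pf V E ((\<lambda>_ x. lam ^ x)(\<rho> := \<lambda>x. lam ^ x * (if x = c then 1 else 0)))"
    unfolding weighted_pf_def config_weight_def
    by (intro sum.cong refl) (subst prod_fun_upd_mult[OF assms(1,4)], simp add: mult_ac)
  finally show ?thesis .
qed

section \<open>Effective fields of gadgets\<close>

definition triangle_factor :: "nat \<Rightarrow> real" where
  "triangle_factor c = (\<Sum>c1\<in>{0, 1}. \<Sum>c2\<in>{0, 1}.
     lam ^ c1 * lam ^ c2 * interaction c c1 * interaction c c2 * interaction c1 c2)"

lemma triangle_factor_eq:
  "triangle_factor 0 = \<beta> ^ 3 + 2 * lam * \<beta> + lam ^ 2 * \<gamma>"
  "triangle_factor 1 = \<beta> + 2 * lam * \<gamma> + lam ^ 2 * \<gamma> ^ 3"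
  by (simp_all add: triangle_factor_def interaction_def power2_eq_square power3_eq_cube algebra_simps)

lemma triangle_factor_diff:
  "lam * (1 - \<gamma>) = 1 - \<beta> \<Longrightarrow> triangle_factor 1 - triangle_factor 0 = - (\<beta> - \<gamma>) * (1 - \<beta>)\<^sup>2"
  unfolding triangle_factor_eq by algebra

definition message :: "(nat \<Rightarrow> real) \<Rightarrow> nat \<Rightarrow> real" where
  "message f c = (\<Sum>c'\<in>{0, 1}. lam ^ c' * f c' * interaction c c')"

lemma message_eq: "message f 0 = \<beta> * f 0 + lam * f 1" "message f 1 = f 0 + \<gamma> * lam * f 1"
  by (simp_all add: message_def interaction_def mult_ac)

text \<open>\<open>shape_pf tri t c\<close> is the partition function of the decorated shape \<open>t\<close> below a vertex
  in state \<open>c\<close>, that vertex excluded.\<close>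

fun shape_pf :: "bool \<Rightarrow> shape \<Rightarrow> nat \<Rightarrow> real" where
  "shape_pf tri Leaf c = (if tri then triangle_factor c else 1)"
| "shape_pf tri (Node a b) c = message (shape_pf tri a) c * message (shape_pf tri b) c"

lemma weighted_pf_attach_child:
  assumes sub: "\<And>W F g. finite W \<Longrightarrow> c \<in> W \<Longrightarrow> \<forall>v\<in>W. v \<le> c \<Longrightarrow> \<forall>e\<in>F. e \<subseteq> W \<Longrightarrow>
      \<forall>v\<in>decorated_V tri t c. g v = (\<lambda>x. lam ^ x) \<Longrightarrow>
      weighted_pf (W \<union> decorated_V tri t c) (F \<union> decorated_E tri t c) g
      = weighted_pf W F (g(c := \<lambda>x. g c x * shape_pf tri t x))"
    and fin: "finite V" and q: "q \<in> V" and c: "\<forall>v\<in>V. v < c" and E: "\<forall>e\<in>E. e \<subseteq> V"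
    and h: "\<forall>v\<in>insert c (decorated_V tri t c). h v = (\<lambda>x. lam ^ x)"
  shows "weighted_pf (insert c V \<union> decorated_V tri t c) (insert {q, c} E \<union> decorated_E tri t c) h
       = weighted_pf V E (h(q := \<lambda>x. h q x * message (shape_pf tri t) x))"
proof -
  let ?h = "h(c := \<lambda>x. h c x * shape_pf tri t x)"
  have "c \<notin> V" using c by blast
  have "weighted_pf (insert c V \<union> decorated_V tri t c) (insert {q, c} E \<union> decorated_E tri t c) h
      = weighted_pf (insert c V) (insert {q, c} E) ?h"
    by (rule sub) (use fin c E q h in \<open>auto simp: less_imp_le\<close>)
  also have "\<dots> = weighted_pf V E (?h(q := \<lambda>x. ?h q x * (\<Sum>c'\<in>{0, 1}. ?h c c' * interaction x c')))"
    by (rule weighted_pf_add_leaf[OF fin \<open>c \<notin> V\<close> q E])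
  also have "\<dots> = weighted_pf V E (h(q := \<lambda>x. h q x * message (shape_pf tri t) x))"
    by (rule weighted_pf_cong) (use \<open>c \<notin> V\<close> q h in \<open>auto simp: message_def mult_ac\<close>)
  finally show ?thesis .
qed

lemma weighted_pf_decorated_Leaf:
  assumes fin: "finite V" and r: "r \<in> V" "\<forall>v\<in>V. v \<le> r" and E: "\<forall>e\<in>E. e \<subseteq> V"
    and h: "\<forall>v\<in>decorated_V tri Leaf r. h v = (\<lambda>x. lam ^ x)"
  shows "weighted_pf (V \<union> decorated_V tri Leaf r) (E \<union> decorated_E tri Leaf r) h
       = weighted_pf V E (h(r := \<lambda>x. h r x * shape_pf tri Leaf x))"
proof (cases tri)
  case False
  then show ?thesis by (simp add: decorated_V_Leaf decorated_E_Leaf)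
next
  case True
  have fresh: "Suc r \<notin> V" "r + 2 \<notin> V" using r(2) by auto
  have "V \<union> decorated_V tri Leaf r = insert (r + 2) (insert (Suc r) V)"
    "E \<union> decorated_E tri Leaf r = insert {r, Suc r} (insert {r, r + 2} (insert {Suc r, r + 2} E))"
    using True by (auto simp: decorated_V_Leaf decorated_E_Leaf)
  then have "weighted_pf (V \<union> decorated_V tri Leaf r) (E \<union> decorated_E tri Leaf r) h
      = weighted_pf V E (h(r := \<lambda>x. h r x * (\<Sum>c1\<in>{0, 1}. \<Sum>c2\<in>{0, 1}. h (Suc r) c1 * h (r + 2) c2 *
          interaction x c1 * interaction x c2 * interaction c1 c2)))"
    using weighted_pf_add_triangle[OF fin fresh _ r(1) E] by simp
  also have "\<dots> = weighted_pf V E (h(r := \<lambda>x. h r x * shape_pf tri Leaf x))"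
    using h True by (intro weighted_pf_cong) (auto simp: decorated_V_Leaf triangle_factor_def)
  finally show ?thesis .
qed

lemma weighted_pf_decorated:
  "finite V \<Longrightarrow> r \<in> V \<Longrightarrow> \<forall>v\<in>V. v \<le> r \<Longrightarrow> \<forall>e\<in>E. e \<subseteq> V \<Longrightarrow>
   \<forall>v\<in>decorated_V tri t r. h v = (\<lambda>x. lam ^ x) \<Longrightarrow>
   weighted_pf (V \<union> decorated_V tri t r) (E \<union> decorated_E tri t r) h
   = weighted_pf V E (h(r := \<lambda>x. h r x * shape_pf tri t x))"
proof (induction t arbitrary: V E h r)
  case Leaf
  then show ?case by (rule weighted_pf_decorated_Leaf)
next
  case (Node a b)
  let ?c1 = "Suc r" and ?c2 = "r + 2 + shape_size a"
  let ?hb = "h(r := \<lambda>x. h r x * message (shape_pf tri b) x)"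
  define W where "W = insert ?c1 V \<union> decorated_V tri a ?c1"
  define F where "F = insert {r, ?c1} E \<union> decorated_E tri a ?c1"
  have W: "finite W" "r \<in> W" "\<forall>v\<in>W. v < ?c2" "\<forall>e\<in>F. e \<subseteq> W"
  proof -
    show "finite W" "r \<in> W" using Node.prems(1,2) by (simp_all add: W_def finite_decorated_V)
    show "\<forall>v\<in>W. v < ?c2"
      using Node.prems(3) decorated_V_range[of _ tri a ?c1] by (fastforce simp: W_def)
    show "\<forall>e\<in>F. e \<subseteq> W"
      using Node.prems(2,4) decorated_E_subset[of _ tri a ?c1] by (auto simp: F_def W_def)
  qed
  have split: "V \<union> decorated_V tri (Node a b) r = insert ?c2 W \<union> decorated_V tri b ?c2"
    "E \<union> decorated_E tri (Node a b) r = insert {r, ?c2} F \<union> decorated_E tri b ?c2"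
    by (auto simp: W_def F_def decorated_V_Node decorated_E_Node)
  have h: "\<forall>v\<in>insert ?c2 (decorated_V tri b ?c2). h v = (\<lambda>x. lam ^ x)"
    using Node.prems(5) by (simp add: decorated_V_Node)
  have "weighted_pf (V \<union> decorated_V tri (Node a b) r) (E \<union> decorated_E tri (Node a b) r) h
      = weighted_pf W F ?hb"
    unfolding split by (rule weighted_pf_attach_child[OF Node.IH(2) W h])
  also have "\<dots> = weighted_pf V E (?hb(r := \<lambda>x. ?hb r x * message (shape_pf tri a) x))"
    unfolding W_def F_def
  proof (rule weighted_pf_attach_child[OF Node.IH(1) Node.prems(1,2) _ Node.prems(4)])
    show "\<forall>v\<in>V. v < ?c1" using Node.prems(3) by auto
    show "\<forall>v\<in>insert ?c1 (decorated_V tri a ?c1). ?hb v = (\<lambda>x. lam ^ x)"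
      using Node.prems(5) decorated_V_range[of r tri a ?c1] by (auto simp: decorated_V_Node)
  qed
  also have "\<dots> = weighted_pf V E (h(r := \<lambda>x. h r x * shape_pf tri (Node a b) x))"
    by (simp add: mult_ac)
  finally show ?case .
qed

lemma weighted_pf_gadget:
  assumes "\<forall>v\<in>insert 1 (decorated_V tri t 1). h v = (\<lambda>x. lam ^ x)"
  shows "weighted_pf (gadget_V tri t) (gadget_E tri t) h
       = h 0 0 * message (shape_pf tri t) 0 + h 0 1 * message (shape_pf tri t) 1"
proof -
  have "weighted_pf (gadget_V tri t) (gadget_E tri t) h
      = weighted_pf (insert 1 {0} \<union> decorated_V tri t 1) (insert {0, 1} {} \<union> decorated_E tri t 1) h"
    by (simp add: gadget_V_def gadget_E_def insert_commute)
  also have "\<dots> = weighted_pf {0} {} (h(0 := \<lambda>x. h 0 x * message (shape_pf tri t) x))"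
    using assms by (intro weighted_pf_attach_child weighted_pf_decorated) auto
  finally show ?thesis by (simp add: weighted_pf_singleton)
qed

definition field_map :: "real \<Rightarrow> real" where
  "field_map z = (1 + \<gamma> * lam * z) / (\<beta> + lam * z)"

definition shape_field :: "bool \<Rightarrow> shape \<Rightarrow> real" where
  "shape_field tri t = shape_pf tri t 1 / shape_pf tri t 0"

lemma shape_field_Leaf: "shape_field tri Leaf = (if tri then triangle_factor 1 / triangle_factor 0 else 1)"
  by (simp add: shape_field_def)

end

locale positive_spin_system = spin_system +
  assumes beta_nonneg: "0 \<le> \<beta>" and gamma_nonneg: "0 \<le> \<gamma>" and not_both_zero: "\<beta> \<noteq> 0 \<or> \<gamma> \<noteq> 0"
    and lam_pos: "0 < lam"
begin

lemma triangle_factor_pos: "0 < triangle_factor 0" "0 < triangle_factor 1"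
proof -
  have nonneg: "0 \<le> \<beta> ^ 3" "0 \<le> 2 * lam * \<beta>" "0 \<le> lam ^ 2 * \<gamma>" "0 \<le> 2 * lam * \<gamma>"
    "0 \<le> lam ^ 2 * \<gamma> ^ 3"
    using beta_nonneg gamma_nonneg lam_pos by simp_all
  have "0 < \<beta> ^ 3 \<or> 0 < lam ^ 2 * \<gamma>"
    using beta_nonneg gamma_nonneg not_both_zero lam_pos by auto
  then show "0 < triangle_factor 0"
    unfolding triangle_factor_eq using nonneg by (elim disjE; linarith)
  have "0 < \<beta> \<or> 0 < 2 * lam * \<gamma>"
    using beta_nonneg gamma_nonneg not_both_zero lam_pos by auto
  then show "0 < triangle_factor 1"
    unfolding triangle_factor_eq using nonneg beta_nonneg by (elim disjE; linarith)
qed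

lemma message_pos:
  assumes "0 < f 0" "0 < f 1"
  shows "0 < message f 0" "0 < message f 1"
proof -
  have "0 \<le> \<beta> * f 0" "0 < lam * f 1" "0 \<le> \<gamma> * lam * f 1"
    using assms beta_nonneg gamma_nonneg lam_pos by simp_all
  then show "0 < message f 0" "0 < message f 1"
    using assms unfolding message_eq by linarith+
qed

lemma shape_pf_pos: "0 < shape_pf tri t 0 \<and> 0 < shape_pf tri t 1"
proof (induction t)
  case Leaf
  show ?case using triangle_factor_pos by simp
next
  case (Node a b)
  then show ?case
    using message_pos[of "shape_pf tri a"] message_pos[of "shape_pf tri b"] by simp
qed

lemma field_map_pos: "0 < z \<Longrightarrow> 0 < field_map z"
  unfolding field_map_def using beta_nonneg gamma_nonneg lam_pos
  by (intro divide_pos_pos add_pos_nonneg add_nonneg_pos) simp_all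

lemma shape_field_pos: "0 < shape_field tri t"
  using shape_pf_pos by (simp add: shape_field_def)

lemma message_ratio:
  assumes "0 < f 0" "0 < f 1"
  shows "message f 1 / message f 0 = field_map (f 1 / f 0)"
proof -
  let ?z = "f 1 / f 0"
  have "f 0 + \<gamma> * lam * f 1 = f 0 * (1 + \<gamma> * lam * ?z)" "\<beta> * f 0 + lam * f 1 = f 0 * (\<beta> + lam * ?z)"
    using assms by (simp_all add: field_simps)
  then show ?thesis using assms unfolding message_eq field_map_def by simp
qed

lemma field_map_shape_field: "field_map (shape_field tri t) = message (shape_pf tri t) 1 / message (shape_pf tri t) 0"
  using message_ratio[of "shape_pf tri t"] shape_pf_pos[of tri t] by (simp add: shape_field_def)

lemma shape_field_Node:
  "shape_field tri (Node a b) = field_map (shape_field tri a) * field_map (shape_field tri b)"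
proof -
  have "shape_field tri (Node a b)
      = message (shape_pf tri a) 1 / message (shape_pf tri a) 0 * (message (shape_pf tri b) 1 / message (shape_pf tri b) 0)"
    by (simp add: shape_field_def)
  then show ?thesis by (simp only: field_map_shape_field)
qed

lemma effective_field_gadget:
  "effective_field \<beta> \<gamma> lam (gadget_V tri t) (gadget_E tri t) 0 = field_map (shape_field tri t)"
proof -
  let ?m = "message (shape_pf tri t)"
  have gadget: "finite (gadget_V tri t)" "finite (gadget_E tri t)" "\<forall>e\<in>gadget_E tri t. e \<noteq> {}"
    "0 \<in> gadget_V tri t"
    using finite_gadget_V finite_gadget_E gadget_E_nonempty by (auto simp: gadget_V_def)
  have "0 \<notin> insert 1 (decorated_V tri t 1)" using decorated_V_range by fastforce
  then have state: "(\<Sum>\<sigma>\<in>{\<sigma> \<in> configs (gadget_V tri t). \<sigma> 0 = c}. gibbs_weight \<beta> \<gamma> lam (gadget_V tri t) (gadget_E tri t) \<sigma>)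
      = (if c = 0 then ?m 0 else 0) + (if c = 1 then lam * ?m 1 else 0)" for c
    unfolding sum_gibbs_weight_state_eq_weighted_pf[OF gadget] by (subst weighted_pf_gadget) auto
  have Z: "partition_fn \<beta> \<gamma> lam (gadget_V tri t) (gadget_E tri t) = ?m 0 + lam * ?m 1"
    unfolding partition_fn_eq_weighted_pf[OF gadget(2,3)] by (subst weighted_pf_gadget) auto
  have pos: "0 < ?m 0" "0 < ?m 1" using message_pos shape_pf_pos by auto
  then have "0 < ?m 0 + lam * ?m 1" using lam_pos by (simp add: add_pos_pos)
  then have "effective_field \<beta> \<gamma> lam (gadget_V tri t) (gadget_E tri t) 0
      = (1 / lam) * ((lam * ?m 1 / (?m 0 + lam * ?m 1)) / (?m 0 / (?m 0 + lam * ?m 1)))"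
    using state[of 0] state[of 1] unfolding effective_field_def gibbs_prob_def Z by simp
  also have "\<dots> = ?m 1 / ?m 0"
    using \<open>0 < ?m 0 + lam * ?m 1\<close> pos lam_pos by simp
  finally show ?thesis by (simp only: field_map_shape_field)
qed

end

section \<open>Contraction of the tree recursion\<close>

lemma abs_add_le_of_opposite_sign:
  fixes d D :: real
  assumes "d * D \<le> 0" "\<bar>D\<bar> \<le> 2 * \<bar>d\<bar>"
  shows "\<bar>d + D\<bar> \<le> \<bar>d\<bar>"
  using assms by (auto simp: mult_le_0_iff abs_if)

lemma LIMSEQ_of_ln_contraction:
  fixes s :: "nat \<Rightarrow> real"
  assumes pos: "\<And>n. 0 < s n" and x: "0 < x" and k: "0 \<le> k" "k < 1"
    and step: "\<And>n. \<bar>ln (s (Suc n)) - ln x\<bar> \<le> k * \<bar>ln (s n) - ln x\<bar>"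
  shows "s \<longlonglongrightarrow> x"
proof -
  have bound: "\<bar>ln (s n) - ln x\<bar> \<le> k ^ n * \<bar>ln (s 0) - ln x\<bar>" for n
  proof (induction n)
    case (Suc n)
    have "\<bar>ln (s (Suc n)) - ln x\<bar> \<le> k * \<bar>ln (s n) - ln x\<bar>" by (rule step)
    also have "\<dots> \<le> k * (k ^ n * \<bar>ln (s 0) - ln x\<bar>)" using Suc k(1) by (rule mult_left_mono)
    finally show ?case by (simp add: mult.assoc)
  qed simp
  have "(\<lambda>n. k ^ n) \<longlonglongrightarrow> 0" using k by (intro LIMSEQ_power_zero) simp
  moreover have "\<forall>\<^sub>F n in sequentially. norm (ln (s n) - ln x) \<le> norm (k ^ n) * \<bar>ln (s 0) - ln x\<bar>"
    using bound k(1) by (intro always_eventually allI) (simp add: abs_of_nonneg)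
  ultimately have "(\<lambda>n. ln (s n) - ln x) \<longlonglongrightarrow> 0" by (rule tendsto_0_le)
  then have "(\<lambda>n. exp (ln (s n) - ln x + ln x)) \<longlonglongrightarrow> exp (0 + ln x)"
    by (intro tendsto_intros)
  then show ?thesis using pos x by simp
qed

lemma LIMSEQ_ex_close_and_closer:
  fixes s :: "nat \<Rightarrow> real"
  assumes "s \<longlonglongrightarrow> x" "\<And>n. s n \<noteq> x" "0 < \<epsilon>1" "0 < \<epsilon>2"
  shows "\<exists>n m. \<bar>s n - x\<bar> < \<epsilon>1 \<and> \<bar>s m - x\<bar> < \<epsilon>2 * \<bar>s n - x\<bar>"
proof -
  have close: "\<exists>n. \<bar>s n - x\<bar> < r" if "0 < r" for r
    using assms(1) that unfolding LIMSEQ_iff by fastforce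
  obtain n where n: "\<bar>s n - x\<bar> < \<epsilon>1" using close[OF assms(3)] ..
  have "0 < \<epsilon>2 * \<bar>s n - x\<bar>" using assms(2)[of n] assms(4) by simp
  then obtain m where "\<bar>s m - x\<bar> < \<epsilon>2 * \<bar>s n - x\<bar>" using close by blast
  then show ?thesis using n by blast
qed

locale antiferro_system = positive_spin_system +
  assumes beta_gamma_lt_1: "\<beta> * \<gamma> < 1"
begin

lemma field_map_denom_pos: "0 < z \<Longrightarrow> 0 < \<beta> + lam * z"
  using beta_nonneg lam_pos by (simp add: add_nonneg_pos)

lemma field_map_numer_pos: "0 < z \<Longrightarrow> 0 < 1 + \<gamma> * lam * z"
  using gamma_nonneg lam_pos by (simp add: add_pos_nonneg)

lemma field_map_diff:
  "0 < a \<Longrightarrow> 0 < b \<Longrightarrow>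
    field_map a - field_map b = lam * (b - a) * (1 - \<beta> * \<gamma>) / ((\<beta> + lam * a) * (\<beta> + lam * b))"
  using field_map_denom_pos[of a] field_map_denom_pos[of b] unfolding field_map_def by (simp add: field_simps)

lemma field_map_strict_antimono: "0 < a \<Longrightarrow> a < b \<Longrightarrow> field_map b < field_map a"
proof -
  assume "0 < a" "a < b"
  then have "0 < lam * (b - a) * (1 - \<beta> * \<gamma>) / ((\<beta> + lam * a) * (\<beta> + lam * b))"
    using field_map_denom_pos[of a] field_map_denom_pos[of b] lam_pos beta_gamma_lt_1 by simp
  then show ?thesis using field_map_diff[of a b] \<open>0 < a\<close> \<open>a < b\<close> by simp
qed

lemma field_map_antimono: "0 < a \<Longrightarrow> a \<le> b \<Longrightarrow> field_map b \<le> field_map a"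
  using field_map_strict_antimono by (cases "a = b") (auto simp: less_eq_real_def)

lemma field_map_inj: "0 < a \<Longrightarrow> 0 < b \<Longrightarrow> field_map a = field_map b \<Longrightarrow> a = b"
  using field_map_strict_antimono by (metis linorder_neq_iff)

lemma field_map_ge_gamma: "\<beta> = 0 \<Longrightarrow> 0 < z \<Longrightarrow> \<gamma> \<le> field_map z"
proof -
  assume "\<beta> = 0" "0 < z"
  then have "field_map z = \<gamma> + 1 / (lam * z)" using lam_pos unfolding field_map_def by (simp add: field_simps)
  then show ?thesis using \<open>0 < z\<close> lam_pos by simp
qed

lemma field_map_le_inverse_beta: "\<gamma> = 0 \<Longrightarrow> 0 < z \<Longrightarrow> field_map z \<le> 1 / \<beta>"
proof -
  assume "\<gamma> = 0" "0 < z"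
  then have "0 < \<beta>" using not_both_zero beta_nonneg by auto
  have "field_map z = 1 / (\<beta> + lam * z)" using \<open>\<gamma> = 0\<close> unfolding field_map_def by simp
  also have "\<dots> \<le> 1 / \<beta>"
    using \<open>0 < z\<close> \<open>0 < \<beta>\<close> lam_pos field_map_denom_pos[of z] by (intro divide_left_mono) simp_all
  finally show ?thesis .
qed

text \<open>The bounds satisfied by every product \<open>field_map a * field_map b\<close>; they keep \<open>log_slope\<close>
  uniformly below 1 also when \<open>\<beta> = 0\<close> or \<open>\<gamma> = 0\<close>.\<close>

definition admissible :: "real \<Rightarrow> bool" where
  "admissible y \<longleftrightarrow> 0 < y \<and> (\<beta> = 0 \<longrightarrow> \<gamma>\<^sup>2 \<le> y) \<and> (\<gamma> = 0 \<longrightarrow> y \<le> 1 / \<beta>\<^sup>2)"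

lemma admissible_field_map_mult: "0 < a \<Longrightarrow> 0 < b \<Longrightarrow> admissible (field_map a * field_map b)"
proof -
  assume "0 < a" "0 < b"
  then have pos: "0 < field_map a" "0 < field_map b" using field_map_pos by auto
  have "\<gamma>\<^sup>2 \<le> field_map a * field_map b" if "\<beta> = 0"
    using field_map_ge_gamma[OF that \<open>0 < a\<close>] field_map_ge_gamma[OF that \<open>0 < b\<close>] gamma_nonneg
    by (simp add: power2_eq_square mult_mono)
  moreover have "field_map a * field_map b \<le> 1 / \<beta>\<^sup>2" if "\<gamma> = 0"
  proof -
    have "field_map a * field_map b \<le> (1 / \<beta>) * (1 / \<beta>)"
      using field_map_le_inverse_beta[OF that \<open>0 < a\<close>] field_map_le_inverse_beta[OF that \<open>0 < b\<close>]
        pos beta_nonneg by (intro mult_mono) auto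
    then show ?thesis by (simp add: power2_eq_square)
  qed
  ultimately show ?thesis using pos by (simp add: admissible_def)
qed

lemma admissible_between: "admissible y1 \<Longrightarrow> admissible y2 \<Longrightarrow> y1 \<le> y \<Longrightarrow> y \<le> y2 \<Longrightarrow> admissible y"
  unfolding admissible_def by auto

definition log_slope :: "real \<Rightarrow> real" where
  "log_slope y = lam * y * (1 - \<beta> * \<gamma>) / ((\<beta> + lam * y) * (1 + \<gamma> * lam * y))"

lemma log_slope_le: "0 < y \<Longrightarrow> log_slope y \<le> (1 - \<beta> * \<gamma>) / (1 + \<beta> * \<gamma>)"
proof -
  assume "0 < y"
  define w where "w = lam * y"
  have w: "0 < w" using \<open>0 < y\<close> lam_pos by (simp add: w_def)
  have "0 \<le> \<beta> * \<gamma>" using beta_nonneg gamma_nonneg by simp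
  have "(\<beta> + w) * (1 + \<gamma> * w) = (1 + \<beta> * \<gamma>) * w + (\<beta> + \<gamma> * w * w)"
    by (simp add: algebra_simps)
  moreover have "0 \<le> \<gamma> * w * w" using gamma_nonneg w by simp
  ultimately have "(1 + \<beta> * \<gamma>) * w \<le> (\<beta> + w) * (1 + \<gamma> * w)" using beta_nonneg by linarith
  then have "w * (1 - \<beta> * \<gamma>) / ((\<beta> + w) * (1 + \<gamma> * w)) \<le> w * (1 - \<beta> * \<gamma>) / ((1 + \<beta> * \<gamma>) * w)"
    using w beta_gamma_lt_1 \<open>0 \<le> \<beta> * \<gamma>\<close> beta_nonneg gamma_nonneg
    by (intro divide_left_mono mult_pos_pos add_nonneg_pos add_pos_nonneg) auto
  also have "\<dots> = (1 - \<beta> * \<gamma>) / (1 + \<beta> * \<gamma>)" using w by simp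
  finally show ?thesis by (simp add: log_slope_def w_def mult.assoc)
qed

lemma log_slope_le_beta_zero:
  assumes "\<beta> = 0" "\<gamma>\<^sup>2 \<le> y"
  shows "log_slope y \<le> 1 / (1 + \<gamma> * lam * \<gamma>\<^sup>2)"
proof -
  have "0 < \<gamma>" using assms(1) not_both_zero gamma_nonneg by auto
  then have "0 < y" using assms(2) zero_less_power[of \<gamma> 2] by linarith
  then have "log_slope y = 1 / (1 + \<gamma> * lam * y)" unfolding log_slope_def using assms(1) lam_pos by simp
  also have "\<dots> \<le> 1 / (1 + \<gamma> * lam * \<gamma>\<^sup>2)"
    using \<open>0 < \<gamma>\<close> assms(2) lam_pos field_map_numer_pos[OF \<open>0 < y\<close>] field_map_numer_pos[of "\<gamma>\<^sup>2"]
    by (intro divide_left_mono add_left_mono mult_left_mono) auto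
  finally show ?thesis .
qed

lemma log_slope_le_gamma_zero:
  assumes "\<gamma> = 0" "0 < y" "y \<le> 1 / \<beta>\<^sup>2"
  shows "log_slope y \<le> (lam / \<beta>\<^sup>2) / (\<beta> + lam / \<beta>\<^sup>2)"
proof -
  have "0 < \<beta>" using assms(1) not_both_zero beta_nonneg by auto
  have mono: "u / (\<beta> + u) \<le> v / (\<beta> + v)" if "0 < u" "u \<le> v" for u v
    using that \<open>0 < \<beta>\<close> mult_right_mono[of u v \<beta>] by (simp add: divide_simps algebra_simps)
  have "log_slope y = lam * y / (\<beta> + lam * y)" unfolding log_slope_def using assms(1) by simp
  also have "\<dots> \<le> (lam / \<beta>\<^sup>2) / (\<beta> + lam / \<beta>\<^sup>2)"
    using assms(2,3) lam_pos by (intro mono) (simp_all add: mult_left_mono divide_inverse)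
  finally show ?thesis .
qed

lemma log_slope_bound: "\<exists>k. 0 \<le> k \<and> k < 1 \<and> (\<forall>y. admissible y \<longrightarrow> log_slope y \<le> k)"
proof -
  consider "0 < \<beta> * \<gamma>" | "\<beta> = 0" | "\<gamma> = 0"
    using beta_nonneg gamma_nonneg by (metis less_eq_real_def mult_eq_0_iff zero_le_mult_iff)
  then show ?thesis
  proof cases
    case 1
    then show ?thesis
      using log_slope_le beta_gamma_lt_1
      by (intro exI[of _ "(1 - \<beta> * \<gamma>) / (1 + \<beta> * \<gamma>)"]) (auto simp: admissible_def)
  next
    case 2
    then have "0 < \<gamma> * lam * \<gamma>\<^sup>2" using not_both_zero gamma_nonneg lam_pos by auto
    moreover have "log_slope y \<le> 1 / (1 + \<gamma> * lam * \<gamma>\<^sup>2)" if "admissible y" for y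
      using that log_slope_le_beta_zero[OF 2] 2 unfolding admissible_def by blast
    ultimately show ?thesis by (intro exI[of _ "1 / (1 + \<gamma> * lam * \<gamma>\<^sup>2)"]) auto
  next
    case 3
    then have "0 < \<beta>" using not_both_zero beta_nonneg by auto
    define T where "T = lam / \<beta>\<^sup>2"
    have "0 < T" using \<open>0 < \<beta>\<close> lam_pos by (simp add: T_def)
    then have "0 \<le> T / (\<beta> + T)" "T / (\<beta> + T) < 1" using \<open>0 < \<beta>\<close> by simp_all
    moreover have "log_slope y \<le> T / (\<beta> + T)" if "admissible y" for y
      using that log_slope_le_gamma_zero[OF 3] 3 unfolding admissible_def T_def by blast
    ultimately show ?thesis by blast
  qed
qed

lemma ln_field_map_exp_deriv:
  "((\<lambda>z. ln (field_map (exp z))) has_real_derivative - log_slope (exp z)) (at z)"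
proof -
  let ?e = "exp z"
  let ?D = "((\<gamma> * lam * ?e) * (\<beta> + lam * ?e) - (1 + \<gamma> * lam * ?e) * (lam * ?e)) / (\<beta> + lam * ?e)\<^sup>2"
  have pos: "0 < \<beta> + lam * ?e" "0 < 1 + \<gamma> * lam * ?e"
    using field_map_denom_pos field_map_numer_pos by simp_all
  have deriv: "((\<lambda>z. field_map (exp z)) has_real_derivative ?D) (at z)"
    unfolding field_map_def using pos by (auto intro!: derivative_eq_intros simp: power2_eq_square)
  have "0 < field_map ?e" by (simp add: field_map_pos)
  from DERIV_chain2[OF DERIV_ln[OF this] deriv]
  have "((\<lambda>z. ln (field_map (exp z))) has_real_derivative inverse (field_map ?e) * ?D) (at z)" .
  moreover have "inverse (field_map ?e) * ?D = - log_slope ?e"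
  proof -
    have quotient_rule: "inverse (n / d) * ((a * d - n * b) / d\<^sup>2) = (a * d - n * b) / (n * d)"
      if "0 < d" "0 < n" for n d a b :: real
      using that by (simp add: field_simps power2_eq_square)
    have "(\<gamma> * lam * ?e) * (\<beta> + lam * ?e) - (1 + \<gamma> * lam * ?e) * (lam * ?e) = - (lam * ?e * (1 - \<beta> * \<gamma>))"
      by (simp add: algebra_simps)
    then show ?thesis
      unfolding field_map_def quotient_rule[OF pos] log_slope_def by (simp add: mult.commute)
  qed
  ultimately show ?thesis by simp
qed

context
  fixes k :: real
  assumes k_nonneg: "0 \<le> k" and k_lt_1: "k < 1"
    and log_slope_le_k: "\<And>y. admissible y \<Longrightarrow> log_slope y \<le> k"
begin

lemma ln_field_map_contraction:
  assumes y1: "admissible y1" and y2: "admissible y2" and le: "y1 \<le> y2"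
  shows "ln (field_map y2) \<le> ln (field_map y1)" and "ln (field_map y1) - ln (field_map y2) \<le> k * (ln y2 - ln y1)"
proof -
  have pos: "0 < y1" "0 < y2" using y1 y2 by (auto simp: admissible_def)
  then show "ln (field_map y2) \<le> ln (field_map y1)"
    using field_map_antimono[OF pos(1) le] field_map_pos by simp
  let ?f = "\<lambda>z. ln (field_map (exp z)) + k * z"
  have "?f (ln y1) \<le> ?f (ln y2)"
  proof (rule DERIV_nonneg_imp_nondecreasing[of "ln y1" "ln y2" ?f])
    show "ln y1 \<le> ln y2" using le pos by simp
    fix z assume z: "ln y1 \<le> z" "z \<le> ln y2"
    then have "y1 \<le> exp z" "exp z \<le> y2" using pos by (metis exp_le_cancel_iff exp_ln)+
    then have "log_slope (exp z) \<le> k" using log_slope_le_k admissible_between[OF y1 y2] by blast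
    moreover have "(?f has_real_derivative (- log_slope (exp z) + k * 1)) (at z)"
      by (intro DERIV_add ln_field_map_exp_deriv DERIV_cmult DERIV_ident)
    ultimately show "\<exists>d. (?f has_real_derivative d) (at z) \<and> 0 \<le> d" by fastforce
  qed
  then show "ln (field_map y1) - ln (field_map y2) \<le> k * (ln y2 - ln y1)"
    using pos by (simp add: algebra_simps)
qed

lemma ln_field_map_lipschitz:
  assumes "admissible u" "admissible v"
  shows "\<bar>ln (field_map u) - ln (field_map v)\<bar> \<le> k * \<bar>ln u - ln v\<bar>"
proof -
  have pos: "0 < u" "0 < v" using assms by (auto simp: admissible_def)
  show ?thesis
  proof (cases "u \<le> v")
    case True
    then show ?thesis using ln_field_map_contraction[OF assms True] pos by simp
  next
    case False
    then show ?thesis using ln_field_map_contraction[OF assms(2,1)] pos by simp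
  qed
qed

lemma field_map_square_admissible: "0 < x \<Longrightarrow> field_map (x * x) = x \<Longrightarrow> admissible (x * x)"
  using admissible_field_map_mult[of "x * x" "x * x"] by simp

text \<open>On the logarithmic scale the two factors of \<open>R * field_map (R * R)\<close> deviate from those of
  \<open>x * field_map (x * x)\<close> in opposite directions, the second by at most twice the first.\<close>

lemma double_branch_contraction:
  assumes a: "0 < a" and x: "0 < x" and fixed: "field_map (x * x) = x"
  defines "R \<equiv> field_map a"
  shows "\<bar>ln (field_map (R * field_map (R * R))) - ln x\<bar> \<le> k * \<bar>ln R - ln x\<bar>"
proof -
  define d where "d = ln R - ln x"
  define D where "D = ln (field_map (R * R)) - ln (field_map (x * x))"
  have R: "0 < R" using field_map_pos a by (simp add: R_def)
  have RR: "admissible (R * R)" using admissible_field_map_mult[OF a a] by (simp add: R_def)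
  have xx: "admissible (x * x)" using field_map_square_admissible[OF x fixed] .
  have "admissible (R * field_map (R * R))"
    using admissible_field_map_mult[OF a, of "R * R"] R by (simp add: R_def)
  then have "\<bar>ln (field_map (R * field_map (R * R))) - ln x\<bar> \<le> k * \<bar>ln (R * field_map (R * R)) - ln (x * x)\<bar>"
    using ln_field_map_lipschitz[OF _ xx] fixed by metis
  also have "ln (R * field_map (R * R)) - ln (x * x) = d + D"
    using R x field_map_pos[of "R * R"] fixed by (simp add: ln_mult d_def D_def)
  also have "\<bar>d + D\<bar> \<le> \<bar>d\<bar>"
  proof (rule abs_add_le_of_opposite_sign)
    show "d * D \<le> 0"
    proof (cases "R \<le> x")
      case True
      then have "R * R \<le> x * x" using R by (simp add: mult_mono)
      then show ?thesis
        using ln_field_map_contraction(1)[OF RR xx] True R by (simp add: d_def D_def mult_le_0_iff)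
    next
      case False
      then have "x * x \<le> R * R" using x by (simp add: mult_mono)
      then show ?thesis
        using ln_field_map_contraction(1)[OF xx RR] False x by (simp add: d_def D_def mult_le_0_iff)
    qed
    have "\<bar>D\<bar> \<le> k * \<bar>ln (R * R) - ln (x * x)\<bar>"
      unfolding D_def by (rule ln_field_map_lipschitz[OF RR xx])
    also have "ln (R * R) - ln (x * x) = 2 * d" using R x by (simp add: ln_mult d_def)
    also have "k * \<bar>2 * d\<bar> = k * (2 * \<bar>d\<bar>)" by (simp add: abs_mult)
    also have "\<dots> \<le> 2 * \<bar>d\<bar>" using k_nonneg k_lt_1 by (simp add: mult_left_le_one_le)
    finally show "\<bar>D\<bar> \<le> 2 * \<bar>d\<bar>" .
  qed
  finally show ?thesis using k_nonneg by (simp add: mult_left_mono d_def)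
qed

lemma fixed_branch_contraction:
  assumes a: "0 < a" and x: "0 < x" and fixed: "field_map (x * x) = x"
  shows "\<bar>ln (field_map (field_map a * x)) - ln x\<bar> \<le> k * \<bar>ln (field_map a) - ln x\<bar>"
proof -
  have "admissible (field_map a * x)"
    using admissible_field_map_mult[OF a, of "x * x"] x fixed by simp
  then have "\<bar>ln (field_map (field_map a * x)) - ln (field_map (x * x))\<bar> \<le> k * \<bar>ln (field_map a * x) - ln (x * x)\<bar>"
    using ln_field_map_lipschitz field_map_square_admissible[OF x fixed] by blast
  also have "ln (field_map a * x) - ln (x * x) = ln (field_map a) - ln x"
    using field_map_pos[OF a] x by (simp add: ln_mult)
  finally show ?thesis using fixed by simp
qed

end

section \<open>Approximating the fixed point\<close>

lemma field_map_one_eq_one_iff: "field_map 1 = 1 \<longleftrightarrow> lam * (1 - \<gamma>) = 1 - \<beta>"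
  using field_map_denom_pos[of 1] by (auto simp: field_map_def algebra_simps)

lemma field_map_square_fixed_point_unique:
  assumes "0 < x" "field_map (x * x) = x" "0 < y" "field_map (y * y) = y"
  shows "x = y"
proof (rule ccontr)
  have less: "y < x" if "0 < x" "x < y" "field_map (x * x) = x" "field_map (y * y) = y" for x y
    using field_map_strict_antimono[of "x * x" "y * y"] that by (simp add: mult_strict_mono)
  assume "x \<noteq> y"
  then show False using less[of x y] less[of y x] assms by linarith
qed

lemma leaf_field_ne_fixed_point:
  assumes x: "0 < x" "field_map (x * x) = x" and nontriv: "\<not> (\<gamma> = \<beta> \<and> lam = 1)"
  shows "field_map (shape_field (triangle_case \<beta> \<gamma> lam) Leaf) \<noteq> x"
proof (cases "triangle_case \<beta> \<gamma> lam")
  case True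
  then have "\<gamma> \<noteq> 1" "\<beta> \<noteq> \<gamma>" using lam_pos by (auto simp: triangle_case_def)
  then have balanced: "lam * (1 - \<gamma>) = 1 - \<beta>" using True by (simp add: triangle_case_def field_simps)
  then have "\<beta> \<noteq> 1" using \<open>\<gamma> \<noteq> 1\<close> lam_pos by auto
  have "x = 1"
    using field_map_square_fixed_point_unique[OF x, of 1] balanced field_map_one_eq_one_iff by simp
  have "triangle_factor 1 \<noteq> triangle_factor 0"
    using triangle_factor_diff[OF balanced] \<open>\<beta> \<noteq> \<gamma>\<close> \<open>\<beta> \<noteq> 1\<close> by auto
  then have "triangle_factor 1 / triangle_factor 0 \<noteq> 1" using triangle_factor_pos by simp
  then have "field_map (triangle_factor 1 / triangle_factor 0) \<noteq> field_map 1"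
    using field_map_inj triangle_factor_pos by (metis divide_pos_pos zero_less_one)
  then show ?thesis using True \<open>x = 1\<close> balanced field_map_one_eq_one_iff by (simp add: shape_field_Leaf)
next
  case False
  show ?thesis
  proof
    assume "field_map (shape_field (triangle_case \<beta> \<gamma> lam) Leaf) = x"
    then have "field_map 1 = x" using False by (simp add: shape_field_Leaf)
    then have "x * x = 1" using field_map_inj[of 1 "x * x"] x by simp
    then have "x = 1" using x(1) power2_eq_1_iff[of x] by (auto simp: power2_eq_square)
    then have balanced: "lam * (1 - \<gamma>) = 1 - \<beta>"
      using \<open>field_map 1 = x\<close> field_map_one_eq_one_iff by simp
    have "\<gamma> \<noteq> 1" using balanced beta_gamma_lt_1 by auto
    then have "lam = (1 - \<beta>) / (1 - \<gamma>)" using balanced by (simp add: field_simps)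
    then have "\<beta> = \<gamma>" using False by (simp add: triangle_case_def)
    then show False using nontriv \<open>lam = (1 - \<beta>) / (1 - \<gamma>)\<close> \<open>\<gamma> \<noteq> 1\<close> by simp
  qed
qed

lemma LIMSEQ_double_branch_fields:
  assumes x: "0 < x" "field_map (x * x) = x"
  shows "(\<lambda>n. field_map (shape_field tri (((\<lambda>t. Node t (Node t t)) ^^ n) t0))) \<longlonglongrightarrow> x"
proof -
  obtain k where k: "0 \<le> k" "k < 1" "\<And>y. admissible y \<Longrightarrow> log_slope y \<le> k"
    using log_slope_bound by blast
  show ?thesis
    using double_branch_contraction[OF k shape_field_pos x] x(1) k(1,2) field_map_pos shape_field_pos
    by (intro LIMSEQ_of_ln_contraction) (simp_all add: shape_field_Node)
qed

lemma LIMSEQ_fixed_branch_fields: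
  assumes x: "0 < x" "field_map (x * x) = x" and X: "field_map (shape_field tri X) = x"
  shows "(\<lambda>n. field_map (shape_field tri (((\<lambda>t. Node t X) ^^ n) t0))) \<longlonglongrightarrow> x"
proof -
  obtain k where k: "0 \<le> k" "k < 1" "\<And>y. admissible y \<Longrightarrow> log_slope y \<le> k"
    using log_slope_bound by blast
  show ?thesis
    using fixed_branch_contraction[OF k shape_field_pos x] x(1) k(1,2) field_map_pos shape_field_pos X
    by (intro LIMSEQ_of_ln_contraction) (simp_all add: shape_field_Node)
qed

lemma fixed_branch_fields_ne:
  assumes x: "0 < x" "field_map (x * x) = x" and X: "field_map (shape_field tri X) = x"
    and t0: "field_map (shape_field tri t0) \<noteq> x"
  shows "field_map (shape_field tri (((\<lambda>t. Node t X) ^^ n) t0)) \<noteq> x"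
proof (induction n)
  case (Suc n)
  let ?R = "field_map (shape_field tri (((\<lambda>t. Node t X) ^^ n) t0))"
  have "0 < ?R * x" using field_map_pos shape_field_pos x(1) by simp
  then have "field_map (?R * x) \<noteq> field_map (x * x)"
    using Suc x(1) field_map_inj[of "?R * x" "x * x"] by auto
  then show ?case using X x(2) by (simp add: shape_field_Node)
qed (simp add: t0)

lemma gadget_fields_approach_fixed_point:
  assumes x: "0 < x" "field_map (x * x) = x" and start: "field_map (shape_field tri Leaf) \<noteq> x"
  obtains s where "s \<longlonglongrightarrow> x" "\<And>n. s n \<noteq> x" "\<And>n. \<exists>t. s n = field_map (shape_field tri t)"
proof (cases "\<exists>X. field_map (shape_field tri X) = x")
  case True
  then obtain X where "field_map (shape_field tri X) = x" ..
  then show ?thesis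
    using that LIMSEQ_fixed_branch_fields[OF x] fixed_branch_fields_ne[OF x _ start] by blast
next
  case False
  then show ?thesis using that LIMSEQ_double_branch_fields[OF x] by blast
qed

end

theorem lemma4p2:
  fixes \<beta> \<gamma> lam x :: real
  assumes af: "antiferromagnetic \<beta> \<gamma>"
    and lam: "lam > 0"
    and nontriv: "\<not> (\<gamma> = \<beta> \<and> lam = 1)"
    and xpos: "x > 0"
    and xfix: "x = (1 + \<gamma> * lam * x ^ 2) / (\<beta> + lam * x ^ 2)"
  shows "\<forall>\<epsilon>1 > 0. \<forall>\<epsilon>2 > 0. \<exists>(V1 :: nat set) E1 \<rho>1 (V2 :: nat set) E2 \<rho>2.
           field_gadget \<beta> \<gamma> lam V1 E1 \<rho>1 \<and> field_gadget \<beta> \<gamma> lam V2 E2 \<rho>2 \<and>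
           \<bar>effective_field \<beta> \<gamma> lam V1 E1 \<rho>1 - x\<bar> < \<epsilon>1 \<and>
           \<bar>effective_field \<beta> \<gamma> lam V2 E2 \<rho>2 - x\<bar> < \<epsilon>2 * \<bar>effective_field \<beta> \<gamma> lam V1 E1 \<rho>1 - x\<bar>"
proof (intro allI impI)
  fix \<epsilon>1 \<epsilon>2 :: real
  assume \<epsilon>: "0 < \<epsilon>1" "0 < \<epsilon>2"
  interpret antiferro_system \<beta> \<gamma> lam
    using af lam by unfold_locales (auto simp: antiferromagnetic_def)
  let ?tri = "triangle_case \<beta> \<gamma> lam"
  let ?R = "\<lambda>t. effective_field \<beta> \<gamma> lam (gadget_V ?tri t) (gadget_E ?tri t) 0"
  have fixed: "field_map (x * x) = x" using xfix by (simp add: field_map_def power2_eq_square)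
  obtain s where s: "s \<longlonglongrightarrow> x" "\<And>n. s n \<noteq> x" "\<And>n. \<exists>t. s n = ?R t"
    using gadget_fields_approach_fixed_point[OF xpos fixed leaf_field_ne_fixed_point[OF xpos fixed nontriv]]
    by (metis effective_field_gadget)
  obtain n m where "\<bar>s n - x\<bar> < \<epsilon>1" "\<bar>s m - x\<bar> < \<epsilon>2 * \<bar>s n - x\<bar>"
    using LIMSEQ_ex_close_and_closer[OF s(1,2) \<epsilon>] by blast
  moreover obtain t1 t2 where "s n = ?R t1" "s m = ?R t2" using s(3) by metis
  ultimately show "\<exists>(V1 :: nat set) E1 \<rho>1 (V2 :: nat set) E2 \<rho>2.
           field_gadget \<beta> \<gamma> lam V1 E1 \<rho>1 \<and> field_gadget \<beta> \<gamma> lam V2 E2 \<rho>2 \<and>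
           \<bar>effective_field \<beta> \<gamma> lam V1 E1 \<rho>1 - x\<bar> < \<epsilon>1 \<and>
           \<bar>effective_field \<beta> \<gamma> lam V2 E2 \<rho>2 - x\<bar> < \<epsilon>2 * \<bar>effective_field \<beta> \<gamma> lam V1 E1 \<rho>1 - x\<bar>"
    using field_gadget_gadget by metis
qed

end
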